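(* There exists a smooth cubic surface over $\mathbb{F}_8$ all 27 of whose lines are defined over $\mathbb{F}_8$. *)

theory Defs
  imports "HOL-Algebra.Algebraic_Closure_Type" "HOL-Library.Numeral_Type"
begin

text \<open>Points of affine 4-space k^4 (homogeneous coordinates x0..x3 of P^3) are
  functions from the 4-element index type.  A cubic form in 4 variables is given by
  its coefficients on the monomials x^e with e an exponent vector of total degree 3.\<close>

definition cubic_monomials :: "(4 \<Rightarrow> nat) set" where
  "cubic_monomials = {e. (\<Sum>i\<in>UNIV. e i) = 3}"

type_synonym 'k cubic_form = "(4 \<Rightarrow> nat) \<Rightarrow> 'k"

definition eval_form :: "'k::comm_ring_1 cubic_form \<Rightarrow> (4 \<Rightarrow> 'k) \<Rightarrow> 'k" where
  "eval_form c x = (\<Sum>e\<in>cubic_monomials. c e * (\<Prod>i\<in>UNIV. x i ^ e i))"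

definition eval_partial :: "'k::comm_ring_1 cubic_form \<Rightarrow> 4 \<Rightarrow> (4 \<Rightarrow> 'k) \<Rightarrow> 'k" where
  "eval_partial c j x = (\<Sum>e\<in>cubic_monomials.
      c e * of_nat (e j) * x j ^ (e j - 1) * (\<Prod>i\<in>UNIV - {j}. x i ^ e i))"

definition form_ac :: "'k::field cubic_form \<Rightarrow> 'k alg_closure cubic_form" where
  "form_ac c = (\<lambda>e. to_ac (c e))"

definition smooth_cubic :: "'k::field cubic_form \<Rightarrow> bool" where
  "smooth_cubic c \<longleftrightarrow>
     (\<forall>x :: 4 \<Rightarrow> 'k alg_closure. (\<exists>i. x i \<noteq> 0) \<longrightarrow>
        \<not> (eval_form (form_ac c) x = 0 \<and> (\<forall>j. eval_partial (form_ac c) j x = 0)))"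

text \<open>Lines of P^3 over a field K = 2-dimensional linear subspaces of K^4.\<close>
definition lin_indep2 :: "(4 \<Rightarrow> 'k::field) \<Rightarrow> (4 \<Rightarrow> 'k) \<Rightarrow> bool" where
  "lin_indep2 u v \<longleftrightarrow> (\<forall>s t. (\<forall>i. s * u i + t * v i = 0) \<longrightarrow> s = 0 \<and> t = 0)"

definition span2 :: "(4 \<Rightarrow> 'k::field) \<Rightarrow> (4 \<Rightarrow> 'k) \<Rightarrow> (4 \<Rightarrow> 'k) set" where
  "span2 u v = {\<lambda>i. s * u i + t * v i | s t. True}"

definition is_line :: "(4 \<Rightarrow> 'k::field) set \<Rightarrow> bool" where
  "is_line L \<longleftrightarrow> (\<exists>u v. lin_indep2 u v \<and> L = span2 u v)"

definition lines_on :: "'k::field cubic_form \<Rightarrow> (4 \<Rightarrow> 'k alg_closure) set set" where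
  "lines_on c = {L. is_line L \<and> (\<forall>x\<in>L. eval_form (form_ac c) x = 0)}"

definition defined_over_base :: "(4 \<Rightarrow> 'k::field alg_closure) set \<Rightarrow> bool" where
  "defined_over_base L \<longleftrightarrow>
     (\<exists>u v :: 4 \<Rightarrow> 'k. L = span2 (\<lambda>i. to_ac (u i)) (\<lambda>i. to_ac (v i)))"

end

theory Submission
  imports Defs
begin

(* The surface is  x0^2 x1 + x0 x1^2 + x1 x2 x3 + x2^2 x3 + x2 x3^2 = 0.  In characteristic 2 the
   gradient of this form is (x1^2, x0^2 + x2 x3, x1 x3 + x3^2, x1 x2 + x2^2), which vanishes only at
   the origin, so the surface is smooth.

   Every line of P^3 has a reduced echelon basis whose pivots (i, j) are the first pair with nonzero
   Plucker coordinate; this covers the lines by six charts.  A line lies on the surface iff the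
   restriction of the form to it, a binary cubic, vanishes, i.e. iff four polynomial equations in
   the chart parameters hold.  Over any field of characteristic 2 containing a root alpha of
   t^3 + t + 1 these equations have exactly 27 solutions: six lines in the big chart for each of the
   roots alpha, alpha^2, alpha^2 + alpha, and nine lines with parameters in {0, 1}.  Over F_8 the
   three roots are rational, so all 27 lines are defined over F_8. *)

lemma UNIV_4: "(UNIV :: 4 set) = {0, 1, 2, 3}"
proof -
  have "card {0::4, 1, 2, 3} = CARD(4)" by simp
  then show ?thesis by (metis card_subset_eq finite subset_UNIV)
qed

lemma distinct_4: "(0::4) \<noteq> 1" "(0::4) \<noteq> 2" "(0::4) \<noteq> 3" "(1::4) \<noteq> 2" "(1::4) \<noteq> 3" "(2::4) \<noteq> 3"
  by simp_all

lemma all_4: "(\<forall>i::4. Q i) \<longleftrightarrow> Q 0 \<and> Q 1 \<and> Q 2 \<and> Q 3"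
  unfolding ball_UNIV[symmetric] UNIV_4 by simp

lemma sum_UNIV_4: "sum (f :: 4 \<Rightarrow> 'a::comm_monoid_add) UNIV = f 0 + f 1 + f 2 + f 3"
  unfolding UNIV_4 using distinct_4 by (simp add: add.assoc)

lemma prod_UNIV_4: "prod (f :: 4 \<Rightarrow> 'a::comm_monoid_mult) UNIV = f 0 * f 1 * f 2 * f 3"
  unfolding UNIV_4 using distinct_4 by (simp add: mult.assoc)

lemma UNIV_4_minus:
  "UNIV - {0::4} = {1, 2, 3}" "UNIV - {1::4} = {0, 2, 3}" "UNIV - {2::4} = {0, 1, 3}" "UNIV - {3::4} = {0, 1, 2}"
  unfolding UNIV_4 using distinct_4 distinct_4[THEN not_sym] by blast+

definition vec4 :: "'a \<Rightarrow> 'a \<Rightarrow> 'a \<Rightarrow> 'a \<Rightarrow> 4 \<Rightarrow> 'a" where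
  "vec4 a b c d = (\<lambda>i. if i = 0 then a else if i = 1 then b else if i = 2 then c else d)"

lemma vec4_simps [simp]:
  "vec4 a b c d 0 = a" "vec4 a b c d 1 = b" "vec4 a b c d 2 = c" "vec4 a b c d 3 = d"
  by (simp_all add: vec4_def)

lemma vec4_eq_iff [simp]: "vec4 a b c d = vec4 a' b' c' d' \<longleftrightarrow> a = a' \<and> b = b' \<and> c = c' \<and> d = d'"
  by (metis vec4_simps)

lemma eq_vec4_iff: "f = vec4 a b c d \<longleftrightarrow> f 0 = a \<and> f 1 = b \<and> f 2 = c \<and> f 3 = d"
  by (auto simp: fun_eq_iff all_4[of "\<lambda>i. f i = vec4 a b c d i"])

section \<open>Pluecker coordinates of lines\<close>

definition plucker :: "(4 \<Rightarrow> 'a::comm_ring_1) \<Rightarrow> (4 \<Rightarrow> 'a) \<Rightarrow> 4 \<Rightarrow> 4 \<Rightarrow> 'a" where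
  "plucker u v i j = u i * v j - u j * v i"

lemma plucker_same [simp]: "plucker u v i i = 0"
  by (simp add: plucker_def)

lemma plucker_eq_0_commute: "plucker u v j i = 0 \<longleftrightarrow> plucker u v i j = 0"
  by (auto simp: plucker_def algebra_simps)

lemma plucker_lincomb:
  "plucker (\<lambda>k. a * u k + b * v k) (\<lambda>k. c * u k + d * v k) i j = (a * d - b * c) * plucker u v i j"
  by (simp add: plucker_def algebra_simps)

lemma lin_indep2_iff_plucker: "lin_indep2 u v \<longleftrightarrow> (\<exists>i j. plucker u v i j \<noteq> 0)"
proof
  assume "lin_indep2 u v"
  then have indep: "\<And>s t. \<forall>k. s * u k + t * v k = 0 \<Longrightarrow> s = 0 \<and> t = 0"
    using lin_indep2_def by blast
  show "\<exists>i j. plucker u v i j \<noteq> 0"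
  proof (rule ccontr)
    assume "\<not> ?thesis"
    then have zero: "\<And>i j. u i * v j = u j * v i" by (metis plucker_def eq_iff_diff_eq_0)
    show False
    proof (cases "\<exists>i. v i \<noteq> 0")
      case True
      then obtain i where "v i \<noteq> 0" by blast
      moreover have "\<forall>k. v i * u k + (- u i) * v k = 0"
      proof
        fix k show "v i * u k + (- u i) * v k = 0"
          using zero[of i k] by (simp add: algebra_simps)
      qed
      ultimately show False using indep by metis
    next
      case False
      then have "\<forall>k. 0 * u k + 1 * v k = 0" by simp
      then show False using indep by (metis zero_neq_one)
    qed
  qed
next
  assume "\<exists>i j. plucker u v i j \<noteq> 0"
  then obtain i j where m: "plucker u v i j \<noteq> 0" by blast
  show "lin_indep2 u v"
    unfolding lin_indep2_def
  proof (intro allI impI)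
    fix s t assume "\<forall>k. s * u k + t * v k = 0"
    then have hi: "s * u i + t * v i = 0" and hj: "s * u j + t * v j = 0" by blast+
    have "s * plucker u v i j = v j * (s * u i + t * v i) - v i * (s * u j + t * v j)"
      "t * plucker u v i j = u i * (s * u j + t * v j) - u j * (s * u i + t * v i)"
      by (simp_all add: plucker_def algebra_simps)
    then have "s * plucker u v i j = 0" "t * plucker u v i j = 0" unfolding hi hj by simp_all
    then show "s = 0 \<and> t = 0" using m by simp
  qed
qed

lemma span2_left [simp]: "u \<in> span2 u v"
  unfolding span2_def by (rule CollectI, rule exI[of _ 1], rule exI[of _ 0]) simp

lemma span2_right [simp]: "v \<in> span2 u v"
  unfolding span2_def by (rule CollectI, rule exI[of _ 0], rule exI[of _ 1]) simp

lemma span2_subset: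
  assumes "p \<in> span2 u v" "q \<in> span2 u v"
  shows "span2 p q \<subseteq> span2 u v"
proof
  fix x assume "x \<in> span2 p q"
  with assms obtain s t a b c d where
    "x = (\<lambda>k. s * p k + t * q k)" "p = (\<lambda>k. a * u k + b * v k)" "q = (\<lambda>k. c * u k + d * v k)"
    by (auto simp: span2_def)
  then have "x = (\<lambda>k. (s * a + t * c) * u k + (s * b + t * d) * v k)"
    by (simp add: algebra_simps)
  then show "x \<in> span2 u v" by (auto simp: span2_def)
qed

lemma span2_eq_imp_plucker_proportional:
  assumes "span2 u v = span2 u' v'"
  obtains c where "\<And>i j. plucker u' v' i j = c * plucker u v i j"
proof -
  have "u' \<in> span2 u v" "v' \<in> span2 u v" using assms by simp_all
  then obtain a b c d where "u' = (\<lambda>k. a * u k + b * v k)" "v' = (\<lambda>k. c * u k + d * v k)"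
    by (auto simp: span2_def)
  then show thesis using that plucker_lincomb by blast
qed

lemma span2_eq_imp_plucker_eq_0_iff:
  assumes "span2 u v = span2 u' v'"
  shows "plucker u v i j = 0 \<longleftrightarrow> plucker u' v' i j = 0"
  by (metis assms mult_zero_right span2_eq_imp_plucker_proportional)

lemma span2_echelon_basis:
  assumes "plucker u v i j \<noteq> 0"
  obtains p q where "span2 u v = span2 p q" "p i = 1" "p j = 0" "q i = 0" "q j = 1"
    "\<And>k. plucker u v k j = 0 \<Longrightarrow> p k = 0" "\<And>k. plucker u v i k = 0 \<Longrightarrow> q k = 0"
proof
  define m where "m = plucker u v i j"
  have m: "m \<noteq> 0" using assms by (simp add: m_def)
  define p where "p k = plucker u v k j / m" for k
  define q where "q k = plucker u v i k / m" for k
  have "p = (\<lambda>k. (v j / m) * u k + (- u j / m) * v k)"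
    by (simp add: fun_eq_iff p_def plucker_def diff_divide_distrib)
  then have "p \<in> span2 u v" unfolding span2_def by blast
  moreover have "q = (\<lambda>k. (- v i / m) * u k + (u i / m) * v k)"
    by (simp add: fun_eq_iff q_def plucker_def diff_divide_distrib)
  then have "q \<in> span2 u v" unfolding span2_def by blast
  moreover have "w i * p k + w j * q k = w k" if "w = u \<or> w = v" for w k
  proof -
    have "w i * plucker u v k j + w j * plucker u v i k = w k * m"
      using that by (auto simp: plucker_def m_def algebra_simps)
    moreover have "w i * p k + w j * q k = (w i * plucker u v k j + w j * plucker u v i k) / m"
      by (simp add: p_def q_def add_divide_distrib)
    ultimately show ?thesis using m by simp
  qed
  then have "u = (\<lambda>k. u i * p k + u j * q k)" "v = (\<lambda>k. v i * p k + v j * q k)" by auto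
  then have "u \<in> span2 p q" "v \<in> span2 p q" unfolding span2_def by blast+
  ultimately show "span2 u v = span2 p q" by (meson span2_subset subset_antisym)
  show "p i = 1" "p j = 0" "q i = 0" "q j = 1" using m by (simp_all add: p_def q_def m_def)
  show "\<And>k. plucker u v k j = 0 \<Longrightarrow> p k = 0" "\<And>k. plucker u v i k = 0 \<Longrightarrow> q k = 0"
    by (simp_all add: p_def q_def)
qed

lemma is_line_span2: "plucker u v i j \<noteq> 0 \<Longrightarrow> is_line (span2 u v)"
  using lin_indep2_iff_plucker is_line_def by blast

lemma span2_neq_by_plucker:
  "plucker u v i j \<noteq> 0 \<Longrightarrow> plucker u' v' i j = 0 \<Longrightarrow> span2 u v \<noteq> span2 u' v'"
  using span2_eq_imp_plucker_eq_0_iff by blast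

(* Lines in reduced echelon form with pivots in the columns i and j. *)

definition chart01 :: "'a \<Rightarrow> 'a \<Rightarrow> 'a \<Rightarrow> 'a \<Rightarrow> (4 \<Rightarrow> 'a::field) set" where
  "chart01 a b c d = span2 (vec4 1 0 a b) (vec4 0 1 c d)"

definition chart02 :: "'a \<Rightarrow> 'a \<Rightarrow> 'a \<Rightarrow> (4 \<Rightarrow> 'a::field) set" where
  "chart02 a b c = span2 (vec4 1 a 0 b) (vec4 0 0 1 c)"

definition chart03 :: "'a \<Rightarrow> 'a \<Rightarrow> (4 \<Rightarrow> 'a::field) set" where
  "chart03 a b = span2 (vec4 1 a b 0) (vec4 0 0 0 1)"

definition chart12 :: "'a \<Rightarrow> 'a \<Rightarrow> (4 \<Rightarrow> 'a::field) set" where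
  "chart12 a b = span2 (vec4 0 1 0 a) (vec4 0 0 1 b)"

definition chart13 :: "'a \<Rightarrow> (4 \<Rightarrow> 'a::field) set" where
  "chart13 a = span2 (vec4 0 1 a 0) (vec4 0 0 0 1)"

definition chart23 :: "(4 \<Rightarrow> 'a::field) set" where
  "chart23 = span2 (vec4 0 0 1 0) (vec4 0 0 0 1)"

lemmas chart_defs = chart01_def chart02_def chart03_def chart12_def chart13_def chart23_def

lemma is_line_charts:
  "is_line (chart01 a b c d)" "is_line (chart02 a b c)" "is_line (chart03 a b)"
  "is_line (chart12 a b)" "is_line (chart13 a)" "is_line chart23"
  unfolding chart_defs
  by (rule is_line_span2[of _ _ 0 1], simp add: plucker_def)
    (rule is_line_span2[of _ _ 0 2] is_line_span2[of _ _ 0 3] is_line_span2[of _ _ 1 2]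
      is_line_span2[of _ _ 1 3] is_line_span2[of _ _ 2 3], simp add: plucker_def)+

lemma chart01_eq_iff [simp]:
  "chart01 a b c d = chart01 a' b' c' d' \<longleftrightarrow> a = a' \<and> b = b' \<and> c = c' \<and> d = d'"
proof
  assume "chart01 a b c d = chart01 a' b' c' d'"
  then obtain l where l: "\<And>i j. plucker (vec4 1 0 a' b') (vec4 0 1 c' d') i j
                                = l * plucker (vec4 1 0 a b) (vec4 0 1 c d) i j"
    unfolding chart01_def by (rule span2_eq_imp_plucker_proportional) blast
  from l[of 0 1] l[of 0 2] l[of 0 3] l[of 1 2] l[of 1 3]
  show "a = a' \<and> b = b' \<and> c = c' \<and> d = d'" by (simp add: plucker_def)
qed simp

lemma chart02_eq_iff [simp]:
  "chart02 a b c = chart02 a' b' c' \<longleftrightarrow> a = a' \<and> b = b' \<and> c = c'"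
proof
  assume "chart02 a b c = chart02 a' b' c'"
  then obtain l where l: "\<And>i j. plucker (vec4 1 a' 0 b') (vec4 0 0 1 c') i j
                                = l * plucker (vec4 1 a 0 b) (vec4 0 0 1 c) i j"
    unfolding chart02_def by (rule span2_eq_imp_plucker_proportional) blast
  from l[of 0 2] l[of 1 2] l[of 2 3] l[of 0 3]
  show "a = a' \<and> b = b' \<and> c = c'" by (simp add: plucker_def)
qed simp

lemma chart03_eq_iff [simp]: "chart03 a b = chart03 a' b' \<longleftrightarrow> a = a' \<and> b = b'"
proof
  assume "chart03 a b = chart03 a' b'"
  then obtain l where l: "\<And>i j. plucker (vec4 1 a' b' 0) (vec4 0 0 0 1) i j
                                = l * plucker (vec4 1 a b 0) (vec4 0 0 0 1) i j"
    unfolding chart03_def by (rule span2_eq_imp_plucker_proportional) blast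
  from l[of 0 3] l[of 1 3] l[of 2 3] show "a = a' \<and> b = b'" by (simp add: plucker_def)
qed simp

lemma chart12_eq_iff [simp]: "chart12 a b = chart12 a' b' \<longleftrightarrow> a = a' \<and> b = b'"
proof
  assume "chart12 a b = chart12 a' b'"
  then obtain l where l: "\<And>i j. plucker (vec4 0 1 0 a') (vec4 0 0 1 b') i j
                                = l * plucker (vec4 0 1 0 a) (vec4 0 0 1 b) i j"
    unfolding chart12_def by (rule span2_eq_imp_plucker_proportional) blast
  from l[of 1 2] l[of 1 3] l[of 2 3] show "a = a' \<and> b = b'" by (simp add: plucker_def)
qed simp

lemma chart13_eq_iff [simp]: "chart13 a = chart13 a' \<longleftrightarrow> a = a'"
proof
  assume "chart13 a = chart13 a'"
  then obtain l where l: "\<And>i j. plucker (vec4 0 1 a' 0) (vec4 0 0 0 1) i j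
                                = l * plucker (vec4 0 1 a 0) (vec4 0 0 0 1) i j"
    unfolding chart13_def by (rule span2_eq_imp_plucker_proportional) blast
  from l[of 1 3] l[of 2 3] show "a = a'" by (simp add: plucker_def)
qed simp

lemma charts_distinct [simp]:
  "chart01 a b c d \<noteq> chart02 a' b' c'" "chart01 a b c d \<noteq> chart03 a' b'"
  "chart01 a b c d \<noteq> chart12 a' b'" "chart01 a b c d \<noteq> chart13 a'"
  "chart02 a b c \<noteq> chart03 a' b'" "chart02 a b c \<noteq> chart12 a' b'" "chart02 a b c \<noteq> chart13 a'"
  "chart03 a b \<noteq> chart12 a' b'" "chart03 a b \<noteq> chart13 a'" "chart12 a b \<noteq> chart13 a'"
  unfolding chart_defs
  by (rule span2_neq_by_plucker[of _ _ 0 1] span2_neq_by_plucker[of _ _ 0 2]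
      span2_neq_by_plucker[of _ _ 0 3] span2_neq_by_plucker[of _ _ 1 2]; simp add: plucker_def)+

lemma lin_indep2_plucker_cases:
  assumes "lin_indep2 u v"
  obtains "plucker u v 0 1 \<noteq> 0"
    | "plucker u v 0 1 = 0" "plucker u v 0 2 \<noteq> 0"
    | "plucker u v 0 1 = 0" "plucker u v 0 2 = 0" "plucker u v 0 3 \<noteq> 0"
    | "plucker u v 0 1 = 0" "plucker u v 0 2 = 0" "plucker u v 0 3 = 0" "plucker u v 1 2 \<noteq> 0"
    | "plucker u v 0 1 = 0" "plucker u v 0 2 = 0" "plucker u v 0 3 = 0" "plucker u v 1 2 = 0"
      "plucker u v 1 3 \<noteq> 0"
    | "plucker u v 0 1 = 0" "plucker u v 0 2 = 0" "plucker u v 0 3 = 0" "plucker u v 1 2 = 0"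
      "plucker u v 1 3 = 0" "plucker u v 2 3 \<noteq> 0"
proof -
  let ?m = "plucker u v"
  have "\<not> (?m 0 1 = 0 \<and> ?m 0 2 = 0 \<and> ?m 0 3 = 0 \<and> ?m 1 2 = 0 \<and> ?m 1 3 = 0 \<and> ?m 2 3 = 0)"
  proof
    assume zero: "?m 0 1 = 0 \<and> ?m 0 2 = 0 \<and> ?m 0 3 = 0 \<and> ?m 1 2 = 0 \<and> ?m 1 3 = 0 \<and> ?m 2 3 = 0"
    have "?m i j = 0" for i j
    proof -
      have "i \<in> {0, 1, 2, 3}" "j \<in> {0, 1, 2, 3}" by (simp_all flip: UNIV_4)
      then show ?thesis using zero by (auto simp: plucker_eq_0_commute)
    qed
    then show False using assms lin_indep2_iff_plucker by blast
  qed
  then show thesis using that by blast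
qed

lemma is_line_cases:
  assumes "is_line L"
  obtains (c01) a b c d where "L = chart01 a b c d" | (c02) a b c where "L = chart02 a b c"
    | (c03) a b where "L = chart03 a b" | (c12) a b where "L = chart12 a b"
    | (c13) a where "L = chart13 a" | (c23) "L = chart23"
proof -
  obtain u v where indep: "lin_indep2 u v" and L: "L = span2 u v"
    using assms is_line_def by blast
  let ?m = "plucker u v"
  from indep show thesis
  proof (cases rule: lin_indep2_plucker_cases)
    case 1
    obtain p q where "L = span2 p q" "p 0 = 1" "p 1 = 0" "q 0 = 0" "q 1 = 1"
      "\<And>k. ?m k 1 = 0 \<Longrightarrow> p k = 0" "\<And>k. ?m 0 k = 0 \<Longrightarrow> q k = 0"
      using \<open>?m 0 1 \<noteq> 0\<close> unfolding L by (rule span2_echelon_basis) blast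
    with 1 have "L = chart01 (p 2) (p 3) (q 2) (q 3)"
      unfolding chart01_def by (auto intro!: arg_cong2[where f = span2] simp: eq_vec4_iff plucker_eq_0_commute)
    then show thesis by (rule c01)
  next
    case 2
    obtain p q where "L = span2 p q" "p 0 = 1" "p 2 = 0" "q 0 = 0" "q 2 = 1"
      "\<And>k. ?m k 2 = 0 \<Longrightarrow> p k = 0" "\<And>k. ?m 0 k = 0 \<Longrightarrow> q k = 0"
      using \<open>?m 0 2 \<noteq> 0\<close> unfolding L by (rule span2_echelon_basis) blast
    with 2 have "L = chart02 (p 1) (p 3) (q 3)"
      unfolding chart02_def by (auto intro!: arg_cong2[where f = span2] simp: eq_vec4_iff plucker_eq_0_commute)
    then show thesis by (rule c02)
  next
    case 3
    obtain p q where "L = span2 p q" "p 0 = 1" "p 3 = 0" "q 0 = 0" "q 3 = 1"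
      "\<And>k. ?m k 3 = 0 \<Longrightarrow> p k = 0" "\<And>k. ?m 0 k = 0 \<Longrightarrow> q k = 0"
      using \<open>?m 0 3 \<noteq> 0\<close> unfolding L by (rule span2_echelon_basis) blast
    with 3 have "L = chart03 (p 1) (p 2)"
      unfolding chart03_def by (auto intro!: arg_cong2[where f = span2] simp: eq_vec4_iff plucker_eq_0_commute)
    then show thesis by (rule c03)
  next
    case 4
    obtain p q where "L = span2 p q" "p 1 = 1" "p 2 = 0" "q 1 = 0" "q 2 = 1"
      "\<And>k. ?m k 2 = 0 \<Longrightarrow> p k = 0" "\<And>k. ?m 1 k = 0 \<Longrightarrow> q k = 0"
      using \<open>?m 1 2 \<noteq> 0\<close> unfolding L by (rule span2_echelon_basis) blast
    with 4 have "L = chart12 (p 3) (q 3)"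
      unfolding chart12_def by (auto intro!: arg_cong2[where f = span2] simp: eq_vec4_iff plucker_eq_0_commute)
    then show thesis by (rule c12)
  next
    case 5
    obtain p q where "L = span2 p q" "p 1 = 1" "p 3 = 0" "q 1 = 0" "q 3 = 1"
      "\<And>k. ?m k 3 = 0 \<Longrightarrow> p k = 0" "\<And>k. ?m 1 k = 0 \<Longrightarrow> q k = 0"
      using \<open>?m 1 3 \<noteq> 0\<close> unfolding L by (rule span2_echelon_basis) blast
    with 5 have "L = chart13 (p 2)"
      unfolding chart13_def by (auto intro!: arg_cong2[where f = span2] simp: eq_vec4_iff plucker_eq_0_commute)
    then show thesis by (rule c13)
  next
    case 6
    obtain p q where "L = span2 p q" "p 2 = 1" "p 3 = 0" "q 2 = 0" "q 3 = 1"
      "\<And>k. ?m k 3 = 0 \<Longrightarrow> p k = 0" "\<And>k. ?m 2 k = 0 \<Longrightarrow> q k = 0"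
      using \<open>?m 2 3 \<noteq> 0\<close> unfolding L by (rule span2_echelon_basis) blast
    with 6 have "L = chart23"
      unfolding chart23_def by (auto intro!: arg_cong2[where f = span2] simp: eq_vec4_iff plucker_eq_0_commute)
    then show thesis by (rule c23)
  qed
qed

section \<open>The cubic surface\<close>

definition surface_cubic :: "(4 \<Rightarrow> 'a::comm_ring_1) \<Rightarrow> 'a" where
  "surface_cubic x = x 0^2 * x 1 + x 0 * x 1^2 + x 1 * x 2 * x 3 + x 2^2 * x 3 + x 2 * x 3^2"

(* The coefficient of s^2 t in surface_cubic (s p + t q): the derivative of surface_cubic at p
   in the direction q. *)

definition surface_polar :: "(4 \<Rightarrow> 'a::comm_ring_1) \<Rightarrow> (4 \<Rightarrow> 'a) \<Rightarrow> 'a" where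
  "surface_polar p q =
     q 0 * (2 * p 0 * p 1 + p 1^2) + q 1 * (p 0^2 + 2 * p 0 * p 1 + p 2 * p 3)
     + q 2 * (p 1 * p 3 + 2 * p 2 * p 3 + p 3^2) + q 3 * (p 1 * p 2 + p 2^2 + 2 * p 2 * p 3)"

lemma surface_cubic_lincomb:
  "surface_cubic (\<lambda>i. s * p i + t * q i) =
     s^3 * surface_cubic p + s^2 * t * surface_polar p q + s * t^2 * surface_polar q p
     + t^3 * surface_cubic q"
  by (simp add: surface_cubic_def surface_polar_def algebra_simps power2_eq_square power3_eq_cube)

lemma binary_cubic_eq_0_imp_coeffs:
  fixes A B C D c :: "'a::field"
  assumes eq: "\<And>s t. s^3 * A + s^2 * t * B + s * t^2 * C + t^3 * D = 0"
    and c: "c \<noteq> 0" "c \<noteq> 1"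
  shows "A = 0 \<and> B = 0 \<and> C = 0 \<and> D = 0"
proof -
  have A: "A = 0" and D: "D = 0" using eq[of 1 0] eq[of 0 1] by simp_all
  have BC: "B + C = 0" using eq[of 1 1] by (simp add: A D)
  have "c * (B + c * C) = 0"
    using eq[of 1 c] by (simp add: A D algebra_simps power2_eq_square)
  then have "B + c * C = 0" using c(1) by simp
  moreover have "(c - 1) * C = (B + c * C) - (B + C)" by (simp add: algebra_simps)
  ultimately have "(c - 1) * C = 0" using BC by simp
  then show ?thesis using A D BC c(2) by simp
qed

lemma span2_on_surface_iff:
  fixes c :: "'a::field" and p q :: "4 \<Rightarrow> 'a"
  assumes "c \<noteq> 0" "c \<noteq> 1"
  shows "(\<forall>x\<in>span2 p q. surface_cubic x = 0) \<longleftrightarrow>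
    surface_cubic p = 0 \<and> surface_polar p q = 0 \<and> surface_polar q p = 0 \<and> surface_cubic q = 0"
proof
  assume "\<forall>x\<in>span2 p q. surface_cubic x = 0"
  then have "surface_cubic (\<lambda>i. s * p i + t * q i) = 0" for s t by (auto simp: span2_def)
  then have "s^3 * surface_cubic p + s^2 * t * surface_polar p q + s * t^2 * surface_polar q p
      + t^3 * surface_cubic q = 0" for s t
    by (simp only: surface_cubic_lincomb)
  from binary_cubic_eq_0_imp_coeffs[OF this assms]
  show "surface_cubic p = 0 \<and> surface_polar p q = 0 \<and> surface_polar q p = 0 \<and> surface_cubic q = 0" .
qed (auto simp: span2_def surface_cubic_lincomb)

section \<open>Lines on the surface in characteristic 2\<close>

lemma char2_numeral:
  assumes "(2::'a::comm_ring_1) = 0"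
  shows "numeral (num.Bit0 n) = (0::'a)" "numeral (num.Bit1 n) = (1::'a)"
proof -
  have "numeral (num.Bit0 n) = (2::'a) * numeral n"
    by (subst numeral_Bit0) (rule mult_2[symmetric])
  then show even: "numeral (num.Bit0 n) = (0::'a)" by (simp only: assms mult_zero_left)
  have "numeral (num.Bit1 n) = numeral (num.Bit0 n) + (1::'a)"
    by (simp only: numeral_Bit0 numeral_Bit1)
  then show "numeral (num.Bit1 n) = (1::'a)" by (simp only: even add_0)
qed

lemma char2_add_self:
  assumes "(2::'a::comm_ring_1) = 0"
  shows "x + x = (0::'a)" "x + (x + y) = y"
  using assms by (metis mult_2 mult_zero_left, metis mult_2 mult_zero_left add.assoc add_0)

lemma char2_add_eq_0_iff:
  assumes "(2::'a::comm_ring_1) = 0"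
  shows "x + y = (0::'a) \<longleftrightarrow> x = y"
  by (metis assms char2_add_self(1) add_diff_cancel_right' diff_0 minus_equation_iff)

definition chart01_params :: "'a::comm_ring_1 \<Rightarrow> ('a \<times> 'a \<times> 'a \<times> 'a) set" where
  "chart01_params x = {(0, x + 1, x, 0), (0, x + 1, x, x + 1), (x + 1, 0, 0, x), (x + 1, 0, x + 1, x),
     (x + 1, x + 1, 0, x + 1), (x + 1, x + 1, x + 1, 0)}"

definition surface_lines :: "(4 \<Rightarrow> 'a::field) set set" where
  "surface_lines =
     (\<Union>x\<in>{x. x^3 + x + 1 = 0}. (\<lambda>(a, b, c, d). chart01 a b c d) ` chart01_params x)
     \<union> {chart02 0 0 0, chart02 0 0 1, chart02 1 0 0, chart02 1 1 1,
        chart03 0 0, chart03 1 0, chart12 0 0, chart12 1 1, chart13 0}"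

locale contains_F8 =
  fixes \<alpha> :: "'a::field"
  assumes char2: "(2::'a) = 0"
    and root: "\<alpha>^3 + \<alpha> + 1 = 0"
begin

(* With these rules simp cancels like terms in pairs, so expanding both sides proves polynomial
   identities that hold in characteristic 2. *)

lemmas char2_simps = char2 char2_numeral[OF char2] char2_add_self[OF char2]

lemma root_reduce: assumes "(x::'a)^3 + x + 1 = 0" shows "x * (x * x) = x + 1"
proof -
  have "x^3 + (x + 1) = 0" using assms by (simp only: add.assoc)
  then show ?thesis by (simp only: char2_add_eq_0_iff[OF char2] power3_eq_cube mult.assoc)
qed

lemma root_neq: assumes "(x::'a)^3 + x + 1 = 0" shows "x \<noteq> 0" "x \<noteq> 1"
  using assms by (auto simp: char2_numeral[OF char2])

lemmas add_eq_0_iff_eq = char2_add_eq_0_iff[OF char2]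

lemma add_add_1_eq_0_iff: "(x::'a) + y + 1 = 0 \<longleftrightarrow> y = x + 1"
  by (metis add_eq_0_iff_eq add.commute add.left_commute)

lemma mult_add_1_eq_0_iff: "(x::'a) * (x + 1) = 0 \<longleftrightarrow> x = 0 \<or> x = 1"
  by (simp add: add_eq_0_iff_eq)

lemma chart01_values:
  fixes a b c d :: 'a
  shows "surface_cubic (vec4 1 0 a b) = a * b * (a + b)"
    and "surface_polar (vec4 1 0 a b) (vec4 0 1 c d) = a^2 * d + a * b + b^2 * c + 1"
    and "surface_polar (vec4 0 1 c d) (vec4 1 0 a b) = a * d^2 + a * d + b * c^2 + b * c + 1"
    and "surface_cubic (vec4 0 1 c d) = c * d * (c + d + 1)"
  by (simp_all add: surface_cubic_def surface_polar_def char2 algebra_simps power2_eq_square)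

lemma chart01_root_case:
  fixes b c d :: 'a
  assumes E2: "b^2 * c + 1 = 0" and E3: "b * c^2 + b * c + 1 = 0" and E4: "c * d * (c + d + 1) = 0"
  shows "c^3 + c + 1 = 0 \<and> b = c + 1 \<and> (d = 0 \<or> d = c + 1)"
proof -
  have "b \<noteq> 0" "c \<noteq> 0" using E2 by auto
  have "b * c * (b + (c + 1)) = (b^2 * c + 1) + (b * c^2 + b * c + 1)"
    by (simp add: algebra_simps power2_eq_square char2_simps)
  also have "\<dots> = 0" by (simp add: E2 E3)
  finally have b: "b = c + 1"
    using \<open>b \<noteq> 0\<close> \<open>c \<noteq> 0\<close> by (simp add: add_eq_0_iff_eq)
  have "c^3 + c + 1 = b^2 * c + 1"
    by (simp add: b algebra_simps power2_eq_square power3_eq_cube char2_simps)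
  moreover have "d = 0 \<or> d = c + 1"
    using E4 \<open>c \<noteq> 0\<close> by (simp add: add_add_1_eq_0_iff)
  ultimately show ?thesis using E2 b by simp
qed

lemma chart01_diagonal_case:
  fixes a d :: 'a
  assumes E2: "a^2 * d + a^2 + 1 = 0" and E3: "a * d^2 + a * d + 1 = 0"
  shows "\<exists>x. x^3 + x + 1 = 0 \<and> a = x + 1 \<and> d = a"
proof -
  have "a \<noteq> 0" using E2 by auto
  have "a^2 * (d + 1) + 1 = 0" using E2 by (simp add: algebra_simps)
  then have "a^2 * (d + 1) = 1" by (simp only: add_eq_0_iff_eq)
  then have "d + 1 \<noteq> 0" by auto
  have "a * (d + 1) * (a + d) = (a^2 * d + a^2 + 1) + (a * d^2 + a * d + 1)"
    by (simp add: algebra_simps power2_eq_square char2_simps)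
  also have "\<dots> = 0" by (simp add: E2 E3)
  finally have d: "d = a"
    using \<open>a \<noteq> 0\<close> \<open>d + 1 \<noteq> 0\<close> by (simp add: add_eq_0_iff_eq)
  have "(a + 1)^3 + (a + 1) + 1 = a^2 * d + a^2 + 1"
    by (simp add: d algebra_simps power2_eq_square power3_eq_cube char2_simps)
  also have "\<dots> = 0" by (rule E2)
  finally have "(a + 1)^3 + (a + 1) + 1 = 0" .
  moreover have "a = (a + 1) + 1" by (simp add: add.assoc char2_simps)
  ultimately show ?thesis using d by blast
qed

lemma chart01_solutions:
  fixes a b c d :: 'a
  assumes E1: "a * b * (a + b) = 0" and E2: "a^2 * d + a * b + b^2 * c + 1 = 0"
    and E3: "a * d^2 + a * d + b * c^2 + b * c + 1 = 0" and E4: "c * d * (c + d + 1) = 0"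
  shows "\<exists>x. x^3 + x + 1 = 0 \<and> (a, b, c, d) \<in> chart01_params x"
proof -
  consider "a = 0" | "b = 0" | "a \<noteq> 0" "b = a"
    using E1 by (auto simp: add_eq_0_iff_eq)
  then show ?thesis
  proof cases
    case 1
    with E2 E3 E4 chart01_root_case[of b c d] show ?thesis
      by (auto simp: chart01_params_def)
  next
    case 2
    with E2 E3 E4 chart01_root_case[of a d c] show ?thesis
      by (auto simp: chart01_params_def ac_simps)
  next
    case 3
    from E4 consider "c = 0" | "d = 0" | "d = c + 1"
      by (auto simp: add_add_1_eq_0_iff)
    then show ?thesis
    proof cases
      case 1
      have "a^2 * d + a^2 + 1 = 0" "a * d^2 + a * d + 1 = 0"
        using E2 E3 by (simp_all add: 1 \<open>b = a\<close> power2_eq_square)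
      then obtain x where "x^3 + x + 1 = 0" "a = x + 1" "d = a"
        using chart01_diagonal_case by blast
      then show ?thesis using 1 \<open>b = a\<close> by (auto simp: chart01_params_def)
    next
      case 2
      have "a^2 * c + a^2 + 1 = 0" "a * c^2 + a * c + 1 = 0"
        using E2 E3 by (simp_all add: 2 \<open>b = a\<close> power2_eq_square algebra_simps)
      then obtain x where "x^3 + x + 1 = 0" "a = x + 1" "c = a"
        using chart01_diagonal_case by blast
      then show ?thesis using 2 \<open>b = a\<close> by (auto simp: chart01_params_def)
    next
      case 3
      have "a^2 * d + a * b + b^2 * c + 1 = 1"
        by (simp add: 3 \<open>b = a\<close> algebra_simps power2_eq_square char2_simps)
      with E2 show ?thesis by simp
    qed
  qed
qed

lemma chart01_params_solve:
  fixes x a b c d :: 'a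
  assumes "x^3 + x + 1 = 0" and "(a, b, c, d) \<in> chart01_params x"
  shows "a * b * (a + b) = 0 \<and> a^2 * d + a * b + b^2 * c + 1 = 0 \<and>
    a * d^2 + a * d + b * c^2 + b * c + 1 = 0 \<and> c * d * (c + d + 1) = 0"
  using assms(2) unfolding chart01_params_def
  by (auto simp: algebra_simps power2_eq_square char2_simps root_reduce[OF assms(1)])

lemma chart01_on_surface_iff:
  fixes a b c d :: 'a
  shows "(\<forall>y\<in>chart01 a b c d. surface_cubic y = 0) \<longleftrightarrow>
    (\<exists>x. x^3 + x + 1 = 0 \<and> (a, b, c, d) \<in> chart01_params x)"
  unfolding chart01_def span2_on_surface_iff[OF root_neq[OF root]] chart01_values
  using chart01_solutions chart01_params_solve by blast

lemma other_charts_values: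
  fixes a b c :: 'a
  shows "surface_cubic (vec4 1 a 0 b) = a * (a + 1)" "surface_polar (vec4 1 a 0 b) (vec4 0 0 1 c) = b * (a + b)"
    "surface_polar (vec4 0 0 1 c) (vec4 1 a 0 b) = a * c + b" "surface_cubic (vec4 0 0 1 c) = c * (c + 1)"
    and "surface_cubic (vec4 1 a b 0) = a * (a + 1)" "surface_polar (vec4 1 a b 0) (vec4 0 0 0 1) = b * (a + b)"
    "surface_polar (vec4 0 0 0 1) (vec4 1 a b 0) = b" "surface_cubic (vec4 0 0 0 (1::'a)) = 0"
    and "surface_cubic (vec4 0 1 0 a) = 0" "surface_polar (vec4 0 1 0 a) (vec4 0 0 1 b) = a * (a + 1)"
    "surface_polar (vec4 0 0 1 b) (vec4 0 1 0 a) = a + b" "surface_cubic (vec4 0 0 1 b) = b * (b + 1)"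
    and "surface_cubic (vec4 0 1 a 0) = 0" "surface_polar (vec4 0 1 a 0) (vec4 0 0 0 1) = a * (a + 1)"
    "surface_polar (vec4 0 0 0 1) (vec4 0 1 a 0) = a"
    and "surface_cubic (vec4 0 0 1 (0::'a)) = 0" "surface_polar (vec4 0 0 1 0) (vec4 0 0 0 (1::'a)) = 1"
    "surface_polar (vec4 0 0 0 1) (vec4 0 0 1 (0::'a)) = 1"
  by (simp_all add: surface_cubic_def surface_polar_def char2 algebra_simps power2_eq_square)

lemma chart02_on_surface_iff:
  fixes a b c :: 'a
  shows "(\<forall>y\<in>chart02 a b c. surface_cubic y = 0) \<longleftrightarrow>
    (a, b, c) \<in> {(0, 0, 0), (0, 0, 1), (1, 0, 0), (1, 1, 1)}"
  unfolding chart02_def span2_on_surface_iff[OF root_neq[OF root]] other_charts_values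
  by (auto simp: mult_add_1_eq_0_iff add_eq_0_iff_eq char2_simps)

lemma chart03_on_surface_iff:
  fixes a b :: 'a
  shows "(\<forall>y\<in>chart03 a b. surface_cubic y = 0) \<longleftrightarrow> (a, b) \<in> {(0, 0), (1, 0)}"
  unfolding chart03_def span2_on_surface_iff[OF root_neq[OF root]] other_charts_values
  by (auto simp: mult_add_1_eq_0_iff add_eq_0_iff_eq char2_simps)

lemma chart12_on_surface_iff:
  fixes a b :: 'a
  shows "(\<forall>y\<in>chart12 a b. surface_cubic y = 0) \<longleftrightarrow> (a, b) \<in> {(0, 0), (1, 1)}"
  unfolding chart12_def span2_on_surface_iff[OF root_neq[OF root]] other_charts_values
  by (auto simp: mult_add_1_eq_0_iff add_eq_0_iff_eq char2_simps)

lemma chart13_on_surface_iff: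
  fixes a :: 'a
  shows "(\<forall>y\<in>chart13 a. surface_cubic y = 0) \<longleftrightarrow> a = 0"
  unfolding chart13_def span2_on_surface_iff[OF root_neq[OF root]] other_charts_values
  by auto

lemma chart23_not_on_surface: "\<not> (\<forall>y\<in>chart23. surface_cubic (y :: 4 \<Rightarrow> 'a) = 0)"
  unfolding chart23_def span2_on_surface_iff[OF root_neq[OF root]] other_charts_values
  by simp

lemma on_surface_imp_mem_surface_lines:
  fixes L :: "(4 \<Rightarrow> 'a) set"
  assumes line: "is_line L" and on: "\<forall>y\<in>L. surface_cubic y = 0"
  shows "L \<in> surface_lines"
  using line
proof (cases rule: is_line_cases)
  case (c01 a b c d)
  with on have "\<forall>y\<in>chart01 a b c d. surface_cubic y = 0" by simp
  then obtain x where x: "x^3 + x + 1 = 0" and p: "(a, b, c, d) \<in> chart01_params x"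
    unfolding chart01_on_surface_iff by blast
  have "L \<in> (\<lambda>(a, b, c, d). chart01 a b c d) ` chart01_params x"
    by (rule image_eqI[of _ _ "(a, b, c, d)"]) (simp_all add: c01 p)
  then have "L \<in> (\<Union>x\<in>{x. x^3 + x + 1 = 0}. (\<lambda>(a, b, c, d). chart01 a b c d) ` chart01_params x)"
    using x by (intro UN_I[of x]) simp_all
  then show ?thesis unfolding surface_lines_def by (rule UnI1)
next
  case (c02 a b c)
  with on have "\<forall>y\<in>chart02 a b c. surface_cubic y = 0" by simp
  then show ?thesis unfolding surface_lines_def c02 chart02_on_surface_iff by (intro UnI2) auto
next
  case (c03 a b)
  with on have "\<forall>y\<in>chart03 a b. surface_cubic y = 0" by simp
  then show ?thesis unfolding surface_lines_def c03 chart03_on_surface_iff by (intro UnI2) auto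
next
  case (c12 a b)
  with on have "\<forall>y\<in>chart12 a b. surface_cubic y = 0" by simp
  then show ?thesis unfolding surface_lines_def c12 chart12_on_surface_iff by (intro UnI2) auto
next
  case (c13 a)
  with on have "\<forall>y\<in>chart13 a. surface_cubic y = 0" by simp
  then show ?thesis unfolding surface_lines_def c13 chart13_on_surface_iff by (intro UnI2) auto
next
  case c23
  then show ?thesis using on chart23_not_on_surface by simp
qed

lemma surface_lines_on_surface:
  fixes L :: "(4 \<Rightarrow> 'a) set"
  assumes "L \<in> surface_lines"
  shows "is_line L \<and> (\<forall>y\<in>L. surface_cubic y = 0)"
  using assms unfolding surface_lines_def
proof (elim UnE UN_E)
  fix x assume x: "x \<in> {x. x^3 + x + 1 = 0}"
    and "L \<in> (\<lambda>(a, b, c, d). chart01 a b c d) ` chart01_params x"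
  then obtain a b c d where p: "(a, b, c, d) \<in> chart01_params x" and L: "L = chart01 a b c d"
    by auto
  have "\<forall>y\<in>chart01 a b c d. surface_cubic y = 0"
    unfolding chart01_on_surface_iff using x p by blast
  then show ?thesis using L is_line_charts by simp
qed (elim insertE emptyE; simp add: is_line_charts chart02_on_surface_iff chart03_on_surface_iff
      chart12_on_surface_iff chart13_on_surface_iff)

lemma lines_on_surface:
  "{L. is_line L \<and> (\<forall>y\<in>L. surface_cubic y = 0)} = (surface_lines :: (4 \<Rightarrow> 'a) set set)"
  using on_surface_imp_mem_surface_lines surface_lines_on_surface by blast

lemma cubic_factorization: "(x::'a)^3 + x + 1 = (x + \<alpha>) * (x + \<alpha>^2) * (x + (\<alpha>^2 + \<alpha>))"
proof -
  have r1: "\<alpha> * (\<alpha> * \<alpha>) = \<alpha> + 1" by (rule root_reduce[OF root])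
  have r2: "\<alpha> * (\<alpha> * (\<alpha> * y)) = \<alpha> * y + y" for y
  proof -
    have "\<alpha> * (\<alpha> * (\<alpha> * y)) = (\<alpha> * (\<alpha> * \<alpha>)) * y" by (simp only: mult.assoc)
    then show ?thesis by (simp add: r1 distrib_right)
  qed
  show ?thesis by (simp add: algebra_simps power2_eq_square power3_eq_cube char2_simps r1 r2)
qed

lemma cubic_roots: "{x::'a. x^3 + x + 1 = 0} = {\<alpha>, \<alpha>^2, \<alpha>^2 + \<alpha>}"
  by (auto simp: cubic_factorization add_eq_0_iff_eq)

lemma card_cubic_roots: "card {x::'a. x^3 + x + 1 = 0} = 3"
proof -
  have "\<alpha> \<noteq> 0" "\<alpha> \<noteq> 1" by (rule root_neq[OF root])+
  have "\<alpha>^2 \<noteq> \<alpha>"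
  proof
    assume sq: "\<alpha>^2 = \<alpha>"
    have "\<alpha> * (\<alpha> + 1) = \<alpha>^2 + \<alpha>" by (simp add: algebra_simps power2_eq_square)
    also have "\<dots> = 0" by (simp add: sq char2_simps)
    finally show False using \<open>\<alpha> \<noteq> 0\<close> \<open>\<alpha> \<noteq> 1\<close> mult_add_1_eq_0_iff by blast
  qed
  then show ?thesis using \<open>\<alpha> \<noteq> 0\<close> not_sym[OF \<open>\<alpha>^2 \<noteq> \<alpha>\<close>] by (simp add: cubic_roots)
qed

lemma root_add_1_neq_0: assumes "(x::'a)^3 + x + 1 = 0" shows "x + 1 \<noteq> 0"
  unfolding add_eq_0_iff_eq by (rule root_neq(2)[OF assms])

lemma card_chart01_params:
  assumes "(x::'a)^3 + x + 1 = 0"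
  shows "card (chart01_params x) = 6"
  using root_neq(1)[OF assms] root_add_1_neq_0[OF assms]
  by (simp add: chart01_params_def not_sym[of x 0] not_sym[of "x + 1" 0])

lemma chart01_params_disjoint:
  assumes "(x::'a)^3 + x + 1 = 0" "y^3 + y + 1 = 0" "x \<noteq> y"
  shows "chart01_params x \<inter> chart01_params y = {}"
  using assms root_neq(1)[of y] root_add_1_neq_0[of y]
  by (auto simp: chart01_params_def not_sym[of y 0] not_sym[of "y + 1" 0])

lemma card_surface_lines: "card (surface_lines :: (4 \<Rightarrow> 'a) set set) = 27"
proof -
  let ?R = "{x::'a. x^3 + x + 1 = 0}"
  let ?f = "\<lambda>(a, b, c, d). chart01 a b c d :: (4 \<Rightarrow> 'a) set"
  have "finite ?R" using card_cubic_roots by (metis card.infinite zero_neq_numeral)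
  have "card (\<Union>x\<in>?R. chart01_params x) = (\<Sum>x\<in>?R. card (chart01_params x))"
    by (rule card_UN_disjoint) (auto simp: \<open>finite ?R\<close> chart01_params_def chart01_params_disjoint)
  also have "\<dots> = 18" by (simp add: card_chart01_params card_cubic_roots)
  finally have "card (\<Union>x\<in>?R. chart01_params x) = 18" .
  moreover have "inj ?f" by (auto simp: inj_def split: prod.splits)
  ultimately have "card (\<Union>x\<in>?R. ?f ` chart01_params x) = 18"
    by (simp add: image_UN[symmetric] card_image inj_on_subset)
  moreover have "card {chart02 0 0 0, chart02 0 0 1, chart02 1 0 0, chart02 1 1 1,
      chart03 0 0, chart03 1 0, chart12 0 0, chart12 1 1, chart13 (0::'a)} = 9"
    by simp
  moreover have "finite (\<Union>x\<in>?R. ?f ` chart01_params x)"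
    using \<open>finite ?R\<close> by (auto simp: chart01_params_def)
  ultimately show ?thesis
    unfolding surface_lines_def by (subst card_Un_disjoint) (auto simp: charts_distinct[THEN not_sym])
qed

end

section \<open>The cubic form and its smoothness\<close>

lemma finite_cubic_monomials: "finite cubic_monomials"
proof (rule finite_subset)
  show "cubic_monomials \<subseteq> PiE UNIV (\<lambda>_. {..3::nat})"
  proof
    fix e assume "e \<in> cubic_monomials"
    then have "sum e UNIV = 3" by (simp add: cubic_monomials_def)
    moreover have "e i \<le> sum e UNIV" for i by (rule member_le_sum) simp_all
    ultimately have "\<And>i. e i \<le> 3" by metis
    then show "e \<in> PiE UNIV (\<lambda>_. {..3::nat})" by (simp add: PiE_UNIV_domain)
  qed
qed (simp add: finite_PiE)

definition surface_monomials :: "(4 \<Rightarrow> nat) set" where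
  "surface_monomials = {vec4 2 1 0 0, vec4 1 2 0 0, vec4 0 1 1 1, vec4 0 0 2 1, vec4 0 0 1 2}"

definition surface_coeffs :: "'k::field cubic_form" where
  "surface_coeffs e = (if e \<in> surface_monomials then 1 else 0)"

lemma sum_cubic_monomials_surface:
  assumes "\<And>e. e \<notin> surface_monomials \<Longrightarrow> f e = 0"
  shows "sum f cubic_monomials =
    f (vec4 2 1 0 0) + f (vec4 1 2 0 0) + f (vec4 0 1 1 1) + f (vec4 0 0 2 1) + (f (vec4 0 0 1 2) :: 'a::comm_ring_1)"
proof -
  have "surface_monomials \<subseteq> cubic_monomials"
    by (simp add: surface_monomials_def cubic_monomials_def sum_UNIV_4)
  then have "sum f cubic_monomials = sum f surface_monomials"
    using assms finite_cubic_monomials by (intro sum.mono_neutral_right) auto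
  then show ?thesis by (simp add: surface_monomials_def add.assoc)
qed

lemma eval_form_surface_coeffs: "eval_form (form_ac surface_coeffs) x = surface_cubic x"
  unfolding eval_form_def
  by (subst sum_cubic_monomials_surface)
    (simp_all add: form_ac_def surface_coeffs_def surface_monomials_def prod_UNIV_4 surface_cubic_def)

lemma eval_partial_surface_coeffs:
  fixes x :: "4 \<Rightarrow> 'k::field alg_closure"
  assumes two: "(2::'k alg_closure) = 0"
  shows "eval_partial (form_ac surface_coeffs) 0 x = x 1^2"
    and "eval_partial (form_ac surface_coeffs) 1 x = x 0^2 + x 2 * x 3"
    and "eval_partial (form_ac surface_coeffs) 2 x = x 1 * x 3 + x 3^2"
    and "eval_partial (form_ac surface_coeffs) 3 x = x 1 * x 2 + x 2^2"
  unfolding eval_partial_def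
  by (subst sum_cubic_monomials_surface;
      simp add: form_ac_def surface_coeffs_def surface_monomials_def UNIV_4_minus
      distinct_4 distinct_4[THEN not_sym] two)+

lemma smooth_surface_coeffs:
  assumes two: "(2::'k::field alg_closure) = 0"
  shows "smooth_cubic (surface_coeffs :: 'k cubic_form)"
  unfolding smooth_cubic_def
proof (intro allI impI notI)
  fix x :: "4 \<Rightarrow> 'k alg_closure"
  assume "\<exists>i. x i \<noteq> 0"
    and "eval_form (form_ac surface_coeffs) x = 0 \<and> (\<forall>j. eval_partial (form_ac surface_coeffs) j x = 0)"
  then have "x 1^2 = 0" "x 0^2 + x 2 * x 3 = 0" "x 1 * x 3 + x 3^2 = 0" "x 1 * x 2 + x 2^2 = 0"
    by (simp_all flip: eval_partial_surface_coeffs[OF two])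
  then have "x 1 = 0" "x 3 = 0" "x 2 = 0" "x 0 = 0" by simp_all
  then have "\<forall>i. x i = 0" by (simp add: all_4)
  with \<open>\<exists>i. x i \<noteq> 0\<close> show False by blast
qed

section \<open>Fields with eight elements\<close>

lemma card_8_char2:
  assumes "CARD('k::field) = 8"
  shows "(2::'k) = 0"
proof -
  have "finite (UNIV :: 'k set)" using assms card.infinite by fastforce
  have "(\<Sum>y\<in>UNIV. y + (1::'k)) = (\<Sum>y\<in>UNIV. y)"
    by (rule sum.reindex_bij_witness[where i="\<lambda>b. b - 1" and j="\<lambda>a. a + 1"]) auto
  then have "(8::'k) = 0" using assms by (simp add: sum.distrib)
  then have "(2::'k) * 2 * 2 = 0" by simp
  then show ?thesis by (metis mult_eq_0_iff)
qed

lemma card_8_power_7: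
  assumes "CARD('k::field) = 8" and "(x::'k) \<noteq> 0"
  shows "x^7 = 1"
proof -
  let ?U = "UNIV - {0::'k}"
  have "finite ?U" using assms(1) card.infinite by fastforce
  have "(\<Prod>y\<in>?U. x * y) = (\<Prod>y\<in>?U. y)"
    by (rule prod.reindex_bij_witness[where i="\<lambda>b. b / x" and j="\<lambda>a. x * a"]) (use assms(2) in auto)
  moreover have "(\<Prod>y\<in>?U. x * y) = x ^ card ?U * (\<Prod>y\<in>?U. y)"
    by (simp add: prod.distrib)
  moreover have "card ?U = 7" using assms(1) \<open>finite ?U\<close> by (simp add: card_Diff_singleton)
  moreover have "(\<Prod>y\<in>?U. y) \<noteq> 0" using \<open>finite ?U\<close> by simp
  ultimately show ?thesis by simp
qed

lemma card_8_cubic_root: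
  assumes "CARD('k::field) = 8"
  shows "\<exists>a::'k. a^3 + a + 1 = 0"
proof -
  have two: "(2::'k) = 0" by (rule card_8_char2[OF assms])
  have "\<not> (UNIV :: 'k set) \<subseteq> {0, 1}"
    using card_mono[of "{0::'k, 1}" UNIV] assms by (auto simp: card_insert_if)
  then obtain x :: 'k where "x \<noteq> 0" "x \<noteq> 1" by blast
  have "(x + 1) * (x^3 + x + 1) * (x^3 + x^2 + 1) = x^7 + 1"
    by (simp add: algebra_simps eval_nat_numeral char2_numeral[OF two] char2_add_self[OF two])
  also have "\<dots> = 0" using card_8_power_7[OF assms \<open>x \<noteq> 0\<close>] by (simp add: char2_add_self[OF two])
  finally consider "x + 1 = 0" | "x^3 + x + 1 = 0" | "x^3 + x^2 + 1 = 0" by auto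
  then show ?thesis
  proof cases
    case 1
    with \<open>x \<noteq> 1\<close> show ?thesis by (simp add: char2_add_eq_0_iff[OF two])
  next
    case 2
    then show ?thesis by blast
  next
    case 3
    have "(x + 1)^3 + (x + 1) + 1 = x^3 + x^2 + 1"
      by (simp add: algebra_simps eval_nat_numeral char2_numeral[OF two] char2_add_self[OF two])
    with 3 show ?thesis by metis
  qed
qed

lemma to_ac_vec4: "(\<lambda>i. to_ac (vec4 a b c d i)) = vec4 (to_ac a) (to_ac b) (to_ac c) (to_ac d)"
  by (simp add: eq_vec4_iff)

lemma defined_over_base_span2_vec4:
  assumes "{a0, a1, a2, a3, b0, b1, b2, b3} \<subseteq> range (to_ac :: 'k::field \<Rightarrow> 'k alg_closure)"
  shows "defined_over_base (span2 (vec4 a0 a1 a2 a3) (vec4 b0 b1 b2 b3))"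
proof -
  from assms obtain a0' a1' a2' a3' b0' b1' b2' b3' :: 'k where
    "a0 = to_ac a0'" "a1 = to_ac a1'" "a2 = to_ac a2'" "a3 = to_ac a3'"
    "b0 = to_ac b0'" "b1 = to_ac b1'" "b2 = to_ac b2'" "b3 = to_ac b3'"
    by (auto simp: image_iff)
  then have "vec4 a0 a1 a2 a3 = (\<lambda>i. to_ac (vec4 a0' a1' a2' a3' i))"
    and "vec4 b0 b1 b2 b3 = (\<lambda>i. to_ac (vec4 b0' b1' b2' b3' i))"
    by (simp_all add: to_ac_vec4)
  then show ?thesis unfolding defined_over_base_def by metis
qed

lemma surface_lines_defined_over_base:
  fixes L :: "(4 \<Rightarrow> 'k::field alg_closure) set"
  assumes "{x. x^3 + x + 1 = 0} \<subseteq> range (to_ac :: 'k::field \<Rightarrow> 'k alg_closure)"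
    and "L \<in> surface_lines"
  shows "defined_over_base L"
proof -
  have rat: "0 \<in> range to_ac" "1 \<in> range to_ac"
    "x \<in> range to_ac \<Longrightarrow> x + 1 \<in> range (to_ac :: 'k \<Rightarrow> 'k alg_closure)" for x
    by (auto intro: range_eqI[of _ _ 0] range_eqI[of _ _ 1] range_eqI[of _ _ "_ + 1"])
  from assms(2) show ?thesis
    unfolding surface_lines_def
  proof (elim UnE UN_E)
    fix x assume x: "x \<in> {x. x^3 + x + 1 = 0}"
      and "L \<in> (\<lambda>(a, b, c, d). chart01 a b c d) ` chart01_params x"
    moreover have "x \<in> range to_ac" using assms(1) x by blast
    ultimately show ?thesis
      by (auto simp: chart01_params_def chart01_def rat intro!: defined_over_base_span2_vec4)
  qed (auto simp: chart_defs rat intro!: defined_over_base_span2_vec4)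
qed

theorem proposition7p3:
  assumes "CARD('k::field) = 8"
  shows "\<exists>c :: 'k cubic_form. smooth_cubic c \<and> card (lines_on c) = 27 \<and>
           (\<forall>L\<in>lines_on c. defined_over_base L)"
proof -
  have two: "(2::'k) = 0" by (rule card_8_char2[OF assms])
  obtain a :: 'k where root: "a^3 + a + 1 = 0" using card_8_cubic_root[OF assms] by blast
  interpret contains_F8 "to_ac a"
  proof
    show "(2::'k alg_closure) = 0" using two by (metis to_ac_0 to_ac_numeral)
    show "to_ac a^3 + to_ac a + 1 = 0" using root by (metis to_ac_0 to_ac_1 to_ac_add to_ac_power)
  qed
  have lines: "lines_on (surface_coeffs :: 'k cubic_form) = surface_lines"
    unfolding lines_on_def eval_form_surface_coeffs by (rule lines_on_surface)
  have "{x. x^3 + x + 1 = 0} \<subseteq> range (to_ac :: 'k \<Rightarrow> 'k alg_closure)"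
    unfolding cubic_roots using rangeI[of to_ac "a^2"] rangeI[of to_ac "a^2 + a"] by simp
  then show ?thesis
    using smooth_surface_coeffs[OF char2] card_surface_lines
    by (intro exI[of _ surface_coeffs]) (auto simp: lines intro: surface_lines_defined_over_base)
qed

end
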